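(* Let $\Sigma$ be a finite set of formulas closed under subformulas. Then for every $\Gamma\in W_c$ and $\varphi\in\Sigma$, $(\mathcal M^{\mathsf{CS4}}_\Sigma,\Gamma)\models\varphi$ iff $\varphi\in\Gamma^+$; consequently, for $\varphi\in\Sigma$, $\mathsf{CS4}\vdash\varphi$ iff $\mathcal M^{\mathsf{CS4}}_\Sigma\models\varphi$.
   Context: Formulas over a countably infinite set $\mathbb P$: $p\mid\bot\mid\varphi\wedge\psi\mid\varphi\vee\psi\mid\varphi\to\psi\mid\Diamond\varphi\mid\Box\varphi$; $\mathcal L$ is the set of all formulas. Satisfaction in a structure $(W,W_\bot,\preccurlyeq,\sqsubseteq,V)$: $p$ iff $w\in V(p)$; $\bot$ iff $w\in W_\bot$; $\wedge,\vee$ pointwise; $w\models\varphi\to\psi$ iff for all $v\succcurlyeq w$, $v\models\varphi$ implies $v\models\psi$; $w\models\Diamond\varphi$ iff for all $u\succcurlyeq w$ there is $v\sqsupseteq u$ with $v\models\varphi$; $w\models\Box\varphi$ iff $v\models\varphi$ whenever $w\preccurlyeq u\sqsubseteq v$; $\mathcal M\models\varphi$ iff $\varphi$ holds at every $w\in W\setminus W_\bot$. $\mathsf{CS4}$ is the least set of formulas containing all intuitionistic propositional tautologies and all instances of $\Box(\varphi\to\psi)\to(\Box\varphi\to\Box\psi)$, $\Box(\varphi\to\psi)\to(\Diamond\varphi\to\Diamond\psi)$, $\Box\varphi\to\varphi$, $\varphi\to\Diamond\varphi$, $\Box\varphi\to\Box\Box\varphi$, $\Diamond\Diamond\varphi\to\Diamond\varphi$,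 closed under modus ponens and necessitation. $\Gamma\vdash\Delta$ means $\mathsf{CS4}\vdash\bigwedge\Gamma'\to\bigvee\Delta'$ for finite $\Gamma'\subseteq\Gamma$, $\Delta'\subseteq\Delta$. A set $X$ is prime if $X\vdash\varphi$ implies $\varphi\in X$ and $\varphi\vee\psi\in X$ implies $\varphi\in X$ or $\psi\in X$. A $\mathsf{CS4}$-theory is a pair $\Phi=(\Phi^+;\Phi^\Diamond)$ with $\Phi^+$ prime and $\Diamond\bigvee\Psi\notin\Phi^+$ for every nonempty finite $\Psi\subseteq\Phi^\Diamond$. $\Phi^\Box=\{\varphi:\Box\varphi\in\Phi^+\}$. $W_c$ = all $\mathsf{CS4}$-theories; $W_{\bot c}=\{(\mathcal L;\varnothing)\}$; $\Phi\preccurlyeq_c\Psi$ iff $\Phi^+\subseteq\Psi^+$; $\Phi\sqsubseteq_c\Psi$ iff $\Phi^\Box\subseteq\Psi^+$ and $\Phi^\Diamond\subseteq\Psi^\Diamond$; $V_c(p)=\{\Phi:p\in\Phi^+\}$. For $\Gamma,\Delta\in W_c$, $\Gamma\preccurlyeq_\Sigma\Delta$ iff $\Gamma\preccurlyeq_c\Delta$ and either $\Gamma^+=\Delta^+$ or there is $\chi\in\Sigma$ with $\chi\in\Delta^+\setminus\Gamma^+$. $\mathcal M^{\mathsf{CS4}}_\Sigma=(W_c,W_{\bot c},\preccurlyeq_\Sigma,\sqsubseteq_c,V_c)$. *)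

theory Defs
  imports Main
begin

datatype form =
    Atom nat
  | Bot
  | And form form
  | Or form form
  | Imp form form
  | Dia form
  | Box form

fun subformulas :: "form \<Rightarrow> form set" where
  "subformulas (Atom p) = {Atom p}"
| "subformulas Bot = {Bot}"
| "subformulas (And a b) = insert (And a b) (subformulas a \<union> subformulas b)"
| "subformulas (Or a b) = insert (Or a b) (subformulas a \<union> subformulas b)"
| "subformulas (Imp a b) = insert (Imp a b) (subformulas a \<union> subformulas b)"
| "subformulas (Dia a) = insert (Dia a) (subformulas a)"
| "subformulas (Box a) = insert (Box a) (subformulas a)"

definition subformula_closed :: "form set \<Rightarrow> bool" where
  "subformula_closed S \<longleftrightarrow> (\<forall>\<phi>\<in>S. subformulas \<phi> \<subseteq> S)"

definition Top :: form where "Top = Imp Bot Bot"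

fun conj_list :: "form list \<Rightarrow> form" where
  "conj_list [] = Top"
| "conj_list [x] = x"
| "conj_list (x # xs) = And x (conj_list xs)"

fun disj_list :: "form list \<Rightarrow> form" where
  "disj_list [] = Bot"
| "disj_list [x] = x"
| "disj_list (x # xs) = Or x (disj_list xs)"

text \<open>Axiom schemes of intuitionistic propositional logic (Hilbert style), instantiated
  over the whole modal language; together with modus ponens they generate exactly
  the substitution instances of intuitionistic propositional tautologies.\<close>
inductive ipc_axiom :: "form \<Rightarrow> bool" where
  "ipc_axiom (Imp a (Imp b a))"
| "ipc_axiom (Imp (Imp a (Imp b c)) (Imp (Imp a b) (Imp a c)))"
| "ipc_axiom (Imp (And a b) a)"
| "ipc_axiom (Imp (And a b) b)"
| "ipc_axiom (Imp a (Imp b (And a b)))"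
| "ipc_axiom (Imp a (Or a b))"
| "ipc_axiom (Imp b (Or a b))"
| "ipc_axiom (Imp (Imp a c) (Imp (Imp b c) (Imp (Or a b) c)))"
| "ipc_axiom (Imp Bot a)"

inductive CS4 :: "form \<Rightarrow> bool" where
  ipc: "ipc_axiom a \<Longrightarrow> CS4 a"
| K_box: "CS4 (Imp (Box (Imp a b)) (Imp (Box a) (Box b)))"
| K_dia: "CS4 (Imp (Box (Imp a b)) (Imp (Dia a) (Dia b)))"
| T_box: "CS4 (Imp (Box a) a)"
| T_dia: "CS4 (Imp a (Dia a))"
| four_box: "CS4 (Imp (Box a) (Box (Box a)))"
| four_dia: "CS4 (Imp (Dia (Dia a)) (Dia a))"
| MP: "CS4 (Imp a b) \<Longrightarrow> CS4 a \<Longrightarrow> CS4 b"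
| Nec: "CS4 a \<Longrightarrow> CS4 (Box a)"

definition derives :: "form set \<Rightarrow> form set \<Rightarrow> bool" where
  "derives G D \<longleftrightarrow> (\<exists>gs ds. set gs \<subseteq> G \<and> set ds \<subseteq> D \<and> CS4 (Imp (conj_list gs) (disj_list ds)))"

definition prime_set :: "form set \<Rightarrow> bool" where
  "prime_set X \<longleftrightarrow> (\<forall>\<phi>. derives X {\<phi>} \<longrightarrow> \<phi> \<in> X) \<and>
                    (\<forall>\<phi> \<psi>. Or \<phi> \<psi> \<in> X \<longrightarrow> \<phi> \<in> X \<or> \<psi> \<in> X)"

type_synonym cs4_theory = "form set \<times> form set"

definition is_theory :: "cs4_theory \<Rightarrow> bool" where
  "is_theory \<Phi> \<longleftrightarrow> prime_set (fst \<Phi>) \<and>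
     (\<forall>ds. ds \<noteq> [] \<longrightarrow> set ds \<subseteq> snd \<Phi> \<longrightarrow> Dia (disj_list ds) \<notin> fst \<Phi>)"

definition box_part :: "cs4_theory \<Rightarrow> form set" where
  "box_part \<Phi> = {\<phi>. Box \<phi> \<in> fst \<Phi>}"

record 'w model =
  worlds :: "'w set"
  fallible :: "'w set"
  pre :: "'w \<Rightarrow> 'w \<Rightarrow> bool"
  mrel :: "'w \<Rightarrow> 'w \<Rightarrow> bool"
  val :: "nat \<Rightarrow> 'w set"

fun sat :: "'w model \<Rightarrow> 'w \<Rightarrow> form \<Rightarrow> bool" where
  "sat M w (Atom p) \<longleftrightarrow> w \<in> val M p"
| "sat M w Bot \<longleftrightarrow> w \<in> fallible M"
| "sat M w (And a b) \<longleftrightarrow> sat M w a \<and> sat M w b"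
| "sat M w (Or a b) \<longleftrightarrow> sat M w a \<or> sat M w b"
| "sat M w (Imp a b) \<longleftrightarrow> (\<forall>v\<in>worlds M. pre M w v \<longrightarrow> sat M v a \<longrightarrow> sat M v b)"
| "sat M w (Dia a) \<longleftrightarrow> (\<forall>u\<in>worlds M. pre M w u \<longrightarrow> (\<exists>v\<in>worlds M. mrel M u v \<and> sat M v a))"
| "sat M w (Box a) \<longleftrightarrow> (\<forall>u\<in>worlds M. \<forall>v\<in>worlds M. pre M w u \<longrightarrow> mrel M u v \<longrightarrow> sat M v a)"

definition valid :: "'w model \<Rightarrow> form \<Rightarrow> bool" where
  "valid M \<phi> \<longleftrightarrow> (\<forall>w \<in> worlds M - fallible M. sat M w \<phi>)"

definition Wc :: "cs4_theory set" where
  "Wc = {\<Phi>. is_theory \<Phi>}"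

definition Wbot_c :: "cs4_theory set" where
  "Wbot_c = {(UNIV, {})}"

definition sq_c :: "cs4_theory \<Rightarrow> cs4_theory \<Rightarrow> bool" where
  "sq_c \<Phi> \<Psi> \<longleftrightarrow> box_part \<Phi> \<subseteq> fst \<Psi> \<and> snd \<Phi> \<subseteq> snd \<Psi>"

definition V_c :: "nat \<Rightarrow> cs4_theory set" where
  "V_c p = {\<Phi>. Atom p \<in> fst \<Phi>}"

definition pre_Sigma :: "form set \<Rightarrow> cs4_theory \<Rightarrow> cs4_theory \<Rightarrow> bool" where
  "pre_Sigma S \<Gamma> \<Delta> \<longleftrightarrow> \<Gamma> \<in> Wc \<and> \<Delta> \<in> Wc \<and> fst \<Gamma> \<subseteq> fst \<Delta> \<and>
     (fst \<Gamma> = fst \<Delta> \<or> (\<exists>\<chi>\<in>S. \<chi> \<in> fst \<Delta> - fst \<Gamma>))"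

definition M_Sigma :: "form set \<Rightarrow> cs4_theory model" where
  "M_Sigma S = \<lparr>worlds = Wc, fallible = Wbot_c, pre = pre_Sigma S, mrel = sq_c, val = V_c\<rparr>"

end

theory Submission
  imports Defs
begin

(* The canonical model has as worlds all CS4-theories (\<Phi>+; \<Phi>\<Diamond>), and the truth lemma is
   proved by induction on \<phi> \<in> \<Sigma>, each implicational or modal case producing a counter-world
   by a Lindenbaum extension. Restricting \<preceq> to \<preceq>\<Sigma> is harmless for implication: if a \<rightarrow> b is
   not in \<Gamma>+, then either a \<in> \<Gamma>+ and \<Gamma> itself refutes it, or the prime extension of
   \<Gamma>+ \<union> {a} avoiding b adds the formula a \<in> \<Sigma>. For \<Box> and \<Diamond> the witnesses are successors with the same
   positive part. A diamond \<Diamond>a \<in> \<Delta>+ is realised by a prime extension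
   of \<Delta>\<Box> \<union> {a} avoiding every \<Diamond>\<Or>\<Psi> with \<Psi> \<subseteq> \<Delta>\<Diamond> (rule K\<Diamond> and axiom 4\<Diamond> show that this is
   consistent), while \<Diamond>a \<notin> \<Gamma>+ is refuted by the theory (\<Gamma>+; {a}). Completeness follows
   because a non-theorem extends to a prime set not containing it. *)

subsection \<open>Derivability from hypotheses\<close>

inductive ded :: "form set \<Rightarrow> form \<Rightarrow> bool" for H where
  hyp: "a \<in> H \<Longrightarrow> ded H a"
| provable: "CS4 a \<Longrightarrow> ded H a"
| mp: "ded H (Imp a b) \<Longrightarrow> ded H a \<Longrightarrow> ded H b"

lemma ded_ipc_axiom: "ipc_axiom a \<Longrightarrow> ded H a"
  by (intro ded.provable CS4.ipc)

lemma CS4_imp_refl: "CS4 (Imp a a)"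
proof -
  have "CS4 (Imp (Imp a (Imp (Imp a a) a)) (Imp (Imp a (Imp a a)) (Imp a a)))"
       "CS4 (Imp a (Imp (Imp a a) a))" "CS4 (Imp a (Imp a a))"
    by (intro CS4.ipc ipc_axiom.intros)+
  then show ?thesis by (meson CS4.MP)
qed

lemma ded_mono: "ded H b \<Longrightarrow> H \<subseteq> H' \<Longrightarrow> ded H' b"
  by (induction rule: ded.induct) (auto intro: ded.intros)

lemma ded_trans: "ded H b \<Longrightarrow> (\<And>h. h \<in> H \<Longrightarrow> ded H' h) \<Longrightarrow> ded H' b"
  by (induction rule: ded.induct) (auto intro: ded.intros)

lemma ded_deduction: "ded (insert a H) b \<Longrightarrow> ded H (Imp a b)"
proof (induction rule: ded.induct)
  case (hyp x)
  show ?case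
  proof (cases "x = a")
    case True
    then show ?thesis using CS4_imp_refl ded.provable by blast
  next
    case False
    then have "ded H x" using hyp ded.hyp by blast
    then show ?thesis by (meson ded.mp ded_ipc_axiom ipc_axiom.intros(1))
  qed
next
  case (provable x)
  then show ?case by (meson ded.mp ded.provable ded_ipc_axiom ipc_axiom.intros(1))
next
  case (mp x y)
  have "ded H (Imp (Imp a (Imp x y)) (Imp (Imp a x) (Imp a y)))"
    by (intro ded_ipc_axiom ipc_axiom.intros)
  then show ?case using mp ded.mp by blast
qed

lemma ded_cut: "ded H a \<Longrightarrow> ded (insert a H) b \<Longrightarrow> ded H b"
  using ded_deduction ded.mp by blast

lemma CS4_if_ded_empty: "ded {} a \<Longrightarrow> CS4 a"
  by (induction rule: ded.induct) (auto intro: CS4.MP)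

lemma CS4_imp_if_ded_singleton: "ded {a} b \<Longrightarrow> CS4 (Imp a b)"
  by (rule CS4_if_ded_empty, rule ded_deduction) simp

lemma CS4_imp_trans: "CS4 (Imp a b) \<Longrightarrow> CS4 (Imp b c) \<Longrightarrow> CS4 (Imp a c)"
  by (rule CS4_imp_if_ded_singleton) (meson ded.hyp ded.mp ded.provable singletonI)

lemma ded_finite_hyps: "ded H b \<Longrightarrow> \<exists>F. finite F \<and> F \<subseteq> H \<and> ded F b"
proof (induction rule: ded.induct)
  case (hyp a)
  then show ?case by (intro exI[of _ "{a}"]) (auto intro: ded.hyp)
next
  case (provable a)
  then show ?case by (intro exI[of _ "{}"]) (auto intro: ded.provable)
next
  case (mp a b)
  then obtain F1 F2 where "finite F1" "F1 \<subseteq> H" "ded F1 (Imp a b)"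
    and "finite F2" "F2 \<subseteq> H" "ded F2 a"
    by blast
  then show ?case by (intro exI[of _ "F1 \<union> F2"]) (auto intro: ded.mp ded_mono)
qed

lemma ded_Box_image: "ded H a \<Longrightarrow> ded (Box ` H) (Box a)"
proof (induction rule: ded.induct)
  case (hyp a)
  then show ?case by (intro ded.hyp) blast
next
  case (provable a)
  then show ?case by (intro ded.provable CS4.Nec)
next
  case (mp a b)
  have "ded (Box ` H) (Imp (Box (Imp a b)) (Imp (Box a) (Box b)))" by (intro ded.provable CS4.K_box)
  then show ?case using mp ded.mp by blast
qed

lemma ded_Box_if_ded_box_part: "ded (box_part \<Gamma>) a \<Longrightarrow> ded (fst \<Gamma>) (Box a)"
  by (drule ded_Box_image, erule ded_mono) (auto simp: box_part_def)

lemma ded_Dia_mono: "ded H (Dia a) \<Longrightarrow> CS4 (Imp a b) \<Longrightarrow> ded H (Dia b)"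
  by (meson CS4.K_dia CS4.Nec ded.mp ded.provable)

lemma ded_AndI: "ded H a \<Longrightarrow> ded H b \<Longrightarrow> ded H (And a b)"
  by (meson ded_ipc_axiom ded.mp ipc_axiom.intros(5))

lemma ded_AndD1: "ded H (And a b) \<Longrightarrow> ded H a"
  by (meson ded_ipc_axiom ded.mp ipc_axiom.intros(3))

lemma ded_AndD2: "ded H (And a b) \<Longrightarrow> ded H b"
  by (meson ded_ipc_axiom ded.mp ipc_axiom.intros(4))

lemma ded_OrI1: "ded H a \<Longrightarrow> ded H (Or a b)"
  by (meson ded_ipc_axiom ded.mp ipc_axiom.intros(6))

lemma ded_OrI2: "ded H b \<Longrightarrow> ded H (Or a b)"
  by (meson ded_ipc_axiom ded.mp ipc_axiom.intros(7))

lemma ded_OrE: "ded H (Or a b) \<Longrightarrow> ded (insert a H) c \<Longrightarrow> ded (insert b H) c \<Longrightarrow> ded H c"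
  by (meson ded_ipc_axiom ded.mp ded_deduction ipc_axiom.intros(8))

lemma ded_BotE: "ded H Bot \<Longrightarrow> ded H c"
  by (meson ded_ipc_axiom ded.mp ipc_axiom.intros(9))

lemma ded_conj_listD: "ded H (conj_list gs) \<Longrightarrow> g \<in> set gs \<Longrightarrow> ded H g"
proof (induction gs rule: conj_list.induct)
  case (3 x y xs)
  then show ?case by (auto dest: ded_AndD1 ded_AndD2)
qed auto

lemma ded_conj_listI: "(\<And>g. g \<in> set gs \<Longrightarrow> ded H g) \<Longrightarrow> ded H (conj_list gs)"
proof (induction gs rule: conj_list.induct)
  case 1
  show ?case unfolding Top_def conj_list.simps by (intro ded_ipc_axiom ipc_axiom.intros)
qed (auto intro: ded_AndI)

lemma ded_disj_listI: "d \<in> set ds \<Longrightarrow> ded H d \<Longrightarrow> ded H (disj_list ds)"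
proof (induction ds rule: disj_list.induct)
  case (3 x y xs)
  then show ?case by (cases "d = x") (simp_all add: ded_OrI1 ded_OrI2)
qed auto

lemma ded_disj_listE:
  "ded H (disj_list ds) \<Longrightarrow> (\<And>d. d \<in> set ds \<Longrightarrow> ded (insert d H) c) \<Longrightarrow> ded H c"
proof (induction ds arbitrary: H rule: disj_list.induct)
  case 1
  then show ?case by (simp add: ded_BotE)
next
  case (2 x)
  then show ?case using ded_cut by simp
next
  case (3 x y xs)
  have "ded (insert (disj_list (y # xs)) H) c"
    by (rule "3.IH") (auto intro: ded.hyp "3.prems"(2)[THEN ded_mono])
  then show ?case using 3 ded_OrE by simp
qed

lemma ded_disj_list_mono:
  "set ds \<subseteq> set es \<Longrightarrow> ded H (disj_list ds) \<Longrightarrow> ded H (disj_list es)"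
  by (erule ded_disj_listE) (meson ded.hyp ded_disj_listI insertI1 subsetD)

lemma CS4_Dia_disj_list_mono:
  assumes "set ds \<subseteq> set es"
  shows "CS4 (Imp (Dia (disj_list ds)) (Dia (disj_list es)))"
proof -
  have "ded {disj_list ds} (disj_list es)"
    using ded_disj_list_mono[OF assms ded.hyp] by simp
  then have "ded {Dia (disj_list ds)} (Dia (disj_list es))"
    using ded_Dia_mono[OF ded.hyp] CS4_imp_if_ded_singleton by blast
  then show ?thesis by (rule CS4_imp_if_ded_singleton)
qed

lemma ded_iff_CS4_conj_list: "ded X \<phi> \<longleftrightarrow> (\<exists>gs. set gs \<subseteq> X \<and> CS4 (Imp (conj_list gs) \<phi>))"
proof
  assume "ded X \<phi>"
  then obtain F where F: "finite F" "F \<subseteq> X" "ded F \<phi>" using ded_finite_hyps by blast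
  then obtain gs where gs: "set gs = F" using finite_list by blast
  have "ded {conj_list gs} \<phi>"
    using ded_trans[OF F(3)] gs ded_conj_listD[OF ded.hyp] by blast
  then show "\<exists>gs. set gs \<subseteq> X \<and> CS4 (Imp (conj_list gs) \<phi>)"
    using gs F CS4_imp_if_ded_singleton by blast
next
  assume "\<exists>gs. set gs \<subseteq> X \<and> CS4 (Imp (conj_list gs) \<phi>)"
  then show "ded X \<phi>" by (meson ded_conj_listI ded.hyp ded.mp ded.provable subsetD)
qed

lemma derives_iff_ded_disj_list: "derives X Y \<longleftrightarrow> (\<exists>ds. set ds \<subseteq> Y \<and> ded X (disj_list ds))"
  unfolding derives_def ded_iff_CS4_conj_list by blast

lemma ded_if_disj_list_singleton_set:
  "set ds \<subseteq> {b} \<Longrightarrow> ded X (disj_list ds) \<Longrightarrow> ded X b"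
  by (erule ded_disj_listE) (auto intro: ded.hyp)

lemma derives_singleton_iff: "derives X {\<phi>} \<longleftrightarrow> ded X \<phi>"
  unfolding derives_iff_ded_disj_list
proof
  show "ded X \<phi> \<Longrightarrow> \<exists>ds. set ds \<subseteq> {\<phi>} \<and> ded X (disj_list ds)"
    by (intro exI[of _ "[\<phi>]"]) simp
qed (use ded_if_disj_list_singleton_set in blast)

lemma prime_set_ded_closed: "prime_set X \<Longrightarrow> ded X \<phi> \<Longrightarrow> \<phi> \<in> X"
  unfolding prime_set_def derives_singleton_iff by blast

subsection \<open>Prime extensions\<close>

definition consistent :: "form set \<Rightarrow> form set \<Rightarrow> bool" where
  "consistent X Y \<longleftrightarrow> \<not> derives X Y"

lemma consistent_disjoint:
  assumes "consistent X Y" "y \<in> Y"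
  shows "y \<notin> X"
proof
  assume "y \<in> X"
  with assms(2) have "set [y] \<subseteq> Y \<and> ded X (disj_list [y])" by (simp add: ded.hyp)
  with assms(1) show False unfolding consistent_def derives_iff_ded_disj_list by blast
qed

lemma consistent_singleton: "\<not> ded X b \<Longrightarrow> consistent X {b}"
  unfolding consistent_def derives_iff_ded_disj_list
  using ded_if_disj_list_singleton_set by blast

lemma consistent_Union_chain:
  assumes "C \<noteq> {}" "subset.chain A C" and "\<And>Z. Z \<in> C \<Longrightarrow> consistent Z Y"
  shows "consistent (\<Union>C) Y"
  unfolding consistent_def derives_iff_ded_disj_list
proof
  assume "\<exists>ds. set ds \<subseteq> Y \<and> ded (\<Union>C) (disj_list ds)"
  then obtain ds where ds: "set ds \<subseteq> Y" "ded (\<Union>C) (disj_list ds)" by blast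
  obtain F where F: "finite F" "F \<subseteq> \<Union>C" "ded F (disj_list ds)"
    using ded_finite_hyps[OF ds(2)] by blast
  then obtain B where "B \<in> C" "F \<subseteq> B" using finite_subset_Union_chain assms by metis
  then show False
    using assms(3) ds(1) ded_mono[OF F(3)] unfolding consistent_def derives_iff_ded_disj_list by blast
qed

lemma prime_if_maximal_consistent:
  assumes cons: "consistent M Y"
    and max: "\<And>\<phi>. \<phi> \<notin> M \<Longrightarrow> \<not> consistent (insert \<phi> M) Y"
  shows "prime_set M"
proof -
  have ext: "\<exists>ds. set ds \<subseteq> Y \<and> ded (insert \<phi> M) (disj_list ds)" if "\<phi> \<notin> M" for \<phi>
    using max[OF that] unfolding consistent_def derives_iff_ded_disj_list by blast
  have closed: "\<phi> \<in> M" if "ded M \<phi>" for \<phi>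
    using cons ext ded_cut[OF that] unfolding consistent_def derives_iff_ded_disj_list by blast
  have "\<phi> \<in> M \<or> \<psi> \<in> M" if "Or \<phi> \<psi> \<in> M" for \<phi> \<psi>
  proof (rule ccontr)
    assume "\<not> (\<phi> \<in> M \<or> \<psi> \<in> M)"
    then obtain ds es where "set ds \<subseteq> Y" "ded (insert \<phi> M) (disj_list ds)"
      and "set es \<subseteq> Y" "ded (insert \<psi> M) (disj_list es)"
      using ext by blast
    then have "ded (insert \<phi> M) (disj_list (ds @ es))" "ded (insert \<psi> M) (disj_list (ds @ es))"
      and "set (ds @ es) \<subseteq> Y"
      by (auto intro: ded_disj_list_mono)
    then show False
      using ded_OrE[OF ded.hyp[OF that]] cons
      unfolding consistent_def derives_iff_ded_disj_list by blast
  qed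
  moreover have "\<phi> \<in> M" if "derives M {\<phi>}" for \<phi>
    using that closed ded_if_disj_list_singleton_set unfolding derives_iff_ded_disj_list by blast
  ultimately show ?thesis unfolding prime_set_def by blast
qed

lemma lindenbaum:
  assumes "consistent X Y"
  obtains Z where "X \<subseteq> Z" "consistent Z Y" "prime_set Z"
proof -
  define A where "A = {Z. X \<subseteq> Z \<and> consistent Z Y}"
  have "\<exists>U\<in>A. \<forall>Z\<in>C. Z \<subseteq> U" if C: "C \<in> chains A" for C
  proof (cases "C = {}")
    case True
    then show ?thesis using assms unfolding A_def by blast
  next
    case False
    have "subset.chain A C" using C by (simp add: chains_alt_def)
    then have "consistent (\<Union>C) Y"
      using False C consistent_Union_chain unfolding chains_def A_def by blast
    moreover have "X \<subseteq> \<Union>C" using False C unfolding chains_def A_def by blast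
    ultimately show ?thesis unfolding A_def by blast
  qed
  then obtain M where M: "M \<in> A" "\<forall>Z\<in>A. M \<subseteq> Z \<longrightarrow> Z = M"
    using Zorn_Lemma2[of A] by blast
  have "prime_set M"
  proof (rule prime_if_maximal_consistent)
    show "consistent M Y" using M(1) by (simp add: A_def)
  next
    fix \<phi> assume "\<phi> \<notin> M"
    show "\<not> consistent (insert \<phi> M) Y"
    proof
      assume "consistent (insert \<phi> M) Y"
      then have "insert \<phi> M \<in> A" using M(1) by (auto simp: A_def)
      then show False using M(2) \<open>\<phi> \<notin> M\<close> by blast
    qed
  qed
  with M that show ?thesis unfolding A_def by blast
qed

subsection \<open>Canonical theories\<close>

lemma theory_prime: "\<Gamma> \<in> Wc \<Longrightarrow> prime_set (fst \<Gamma>)"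
  by (simp add: Wc_def is_theory_def)

lemma theory_Dia_notin:
  "\<Gamma> \<in> Wc \<Longrightarrow> ds \<noteq> [] \<Longrightarrow> set ds \<subseteq> snd \<Gamma> \<Longrightarrow> Dia (disj_list ds) \<notin> fst \<Gamma>"
  by (simp add: Wc_def is_theory_def)

lemma theory_ded_closed: "\<Gamma> \<in> Wc \<Longrightarrow> ded (fst \<Gamma>) \<phi> \<Longrightarrow> \<phi> \<in> fst \<Gamma>"
  using prime_set_ded_closed theory_prime by blast

lemma prime_set_theory: "prime_set Z \<Longrightarrow> (Z, {}) \<in> Wc"
  by (simp add: Wc_def is_theory_def)

lemma M_Sigma_simps [simp]:
  "worlds (M_Sigma S) = Wc" "fallible (M_Sigma S) = Wbot_c"
  "pre (M_Sigma S) = pre_Sigma S" "mrel (M_Sigma S) = sq_c" "val (M_Sigma S) = V_c"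
  by (simp_all add: M_Sigma_def)

lemma pre_Sigma_refl_fst: "\<Gamma> \<in> Wc \<Longrightarrow> \<Delta> \<in> Wc \<Longrightarrow> fst \<Delta> = fst \<Gamma> \<Longrightarrow> pre_Sigma S \<Gamma> \<Delta>"
  by (simp add: pre_Sigma_def)

lemma fallible_iff_Bot:
  assumes G: "\<Gamma> \<in> Wc"
  shows "\<Gamma> \<in> Wbot_c \<longleftrightarrow> Bot \<in> fst \<Gamma>"
proof
  assume "\<Gamma> \<in> Wbot_c"
  then show "Bot \<in> fst \<Gamma>" by (simp add: Wbot_c_def)
next
  assume "Bot \<in> fst \<Gamma>"
  then have univ: "fst \<Gamma> = UNIV"
    using theory_ded_closed[OF G ded_BotE[OF ded.hyp]] by blast
  have "snd \<Gamma> = {}"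
    using theory_Dia_notin[OF G, of "[_]"] univ by auto
  with univ show "\<Gamma> \<in> Wbot_c" by (simp add: Wbot_c_def prod_eq_iff)
qed

lemma Imp_in_theory_iff:
  assumes G: "\<Gamma> \<in> Wc" and "a \<in> S"
  shows "(\<forall>\<Delta>\<in>Wc. pre_Sigma S \<Gamma> \<Delta> \<longrightarrow> a \<in> fst \<Delta> \<longrightarrow> b \<in> fst \<Delta>) \<longleftrightarrow> Imp a b \<in> fst \<Gamma>"
proof
  assume "Imp a b \<in> fst \<Gamma>"
  then show "\<forall>\<Delta>\<in>Wc. pre_Sigma S \<Gamma> \<Delta> \<longrightarrow> a \<in> fst \<Delta> \<longrightarrow> b \<in> fst \<Delta>"
    unfolding pre_Sigma_def by (meson ded.hyp ded.mp subsetD theory_ded_closed)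
next
  assume R: "\<forall>\<Delta>\<in>Wc. pre_Sigma S \<Gamma> \<Delta> \<longrightarrow> a \<in> fst \<Delta> \<longrightarrow> b \<in> fst \<Delta>"
  show "Imp a b \<in> fst \<Gamma>"
  proof (rule ccontr)
    assume "Imp a b \<notin> fst \<Gamma>"
    then have nd: "\<not> ded (insert a (fst \<Gamma>)) b"
      using theory_ded_closed[OF G ded_deduction] by blast
    show False
    proof (cases "a \<in> fst \<Gamma>")
      case True
      then show False using R G nd pre_Sigma_refl_fst ded.hyp by blast
    next
      case False
      obtain Z where Z: "insert a (fst \<Gamma>) \<subseteq> Z" "consistent Z {b}" "prime_set Z"
        using lindenbaum[OF consistent_singleton[OF nd]] .
      have "pre_Sigma S \<Gamma> (Z, {})"
        using G prime_set_theory[OF Z(3)] Z(1) False \<open>a \<in> S\<close> by (auto simp: pre_Sigma_def)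
      then show False using R prime_set_theory[OF Z(3)] Z(1) consistent_disjoint[OF Z(2)] by auto
    qed
  qed
qed

lemma Box_in_theory_iff:
  assumes G: "\<Gamma> \<in> Wc"
  shows "(\<forall>\<Delta>\<in>Wc. \<forall>\<Theta>\<in>Wc. pre_Sigma S \<Gamma> \<Delta> \<longrightarrow> sq_c \<Delta> \<Theta> \<longrightarrow> a \<in> fst \<Theta>) \<longleftrightarrow> Box a \<in> fst \<Gamma>"
proof
  assume "Box a \<in> fst \<Gamma>"
  then show "\<forall>\<Delta>\<in>Wc. \<forall>\<Theta>\<in>Wc. pre_Sigma S \<Gamma> \<Delta> \<longrightarrow> sq_c \<Delta> \<Theta> \<longrightarrow> a \<in> fst \<Theta>"
    by (auto simp: pre_Sigma_def sq_c_def box_part_def)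
next
  assume R: "\<forall>\<Delta>\<in>Wc. \<forall>\<Theta>\<in>Wc. pre_Sigma S \<Gamma> \<Delta> \<longrightarrow> sq_c \<Delta> \<Theta> \<longrightarrow> a \<in> fst \<Theta>"
  show "Box a \<in> fst \<Gamma>"
  proof (rule ccontr)
    assume "Box a \<notin> fst \<Gamma>"
    then have "\<not> ded (box_part \<Gamma>) a"
      using theory_ded_closed[OF G] ded_Box_if_ded_box_part by blast
    then obtain Z where Z: "box_part \<Gamma> \<subseteq> Z" "consistent Z {a}" "prime_set Z"
      using lindenbaum consistent_singleton by blast
    let ?\<Delta> = "(fst \<Gamma>, {} :: form set)"
    have \<Delta>: "?\<Delta> \<in> Wc" "pre_Sigma S \<Gamma> ?\<Delta>"
      using G prime_set_theory[OF theory_prime[OF G]] pre_Sigma_refl_fst by auto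
    moreover have "sq_c ?\<Delta> (Z, {})" using Z(1) by (simp add: sq_c_def box_part_def)
    ultimately have "a \<in> Z" using R prime_set_theory[OF Z(3)] by fastforce
    then show False using consistent_disjoint[OF Z(2)] by blast
  qed
qed

lemma Dia_disj_list_upper_bound:
  assumes "d \<in> P"
  shows "set es \<subseteq> {Dia (disj_list ds) | ds. ds \<noteq> [] \<and> set ds \<subseteq> P} \<Longrightarrow>
    \<exists>D. D \<noteq> [] \<and> set D \<subseteq> P \<and> (\<forall>e\<in>set es. CS4 (Imp e (Dia (disj_list D))))"
proof (induction es)
  case Nil
  then show ?case using assms by (intro exI[of _ "[d]"]) simp
next
  case (Cons e es)
  then obtain D where D: "D \<noteq> []" "set D \<subseteq> P" "\<forall>e\<in>set es. CS4 (Imp e (Dia (disj_list D)))"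
    by auto
  obtain ds where ds: "e = Dia (disj_list ds)" "set ds \<subseteq> P" using Cons.prems by auto
  have "CS4 (Imp e (Dia (disj_list (ds @ D))))"
    using ds CS4_Dia_disj_list_mono[of ds "ds @ D"] by simp
  moreover have "CS4 (Imp e' (Dia (disj_list (ds @ D))))" if "e' \<in> set es" for e'
    using that D(3) CS4_imp_trans CS4_Dia_disj_list_mono[of D "ds @ D"] by auto
  ultimately show ?case using D ds by (intro exI[of _ "ds @ D"]) auto
qed

lemma consistent_box_part_Dia:
  assumes D: "\<Delta> \<in> Wc" and "Dia a \<in> fst \<Delta>" "d \<in> snd \<Delta>"
  shows "consistent (insert a (box_part \<Delta>)) {Dia (disj_list ds) | ds. ds \<noteq> [] \<and> set ds \<subseteq> snd \<Delta>}"
  unfolding consistent_def derives_iff_ded_disj_list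
proof
  assume "\<exists>es. set es \<subseteq> {Dia (disj_list ds) | ds. ds \<noteq> [] \<and> set ds \<subseteq> snd \<Delta>} \<and>
    ded (insert a (box_part \<Delta>)) (disj_list es)"
  then obtain es where es: "set es \<subseteq> {Dia (disj_list ds) | ds. ds \<noteq> [] \<and> set ds \<subseteq> snd \<Delta>}"
    "ded (insert a (box_part \<Delta>)) (disj_list es)"
    by blast
  obtain ds where ds: "ds \<noteq> []" "set ds \<subseteq> snd \<Delta>"
    and bound: "\<forall>e\<in>set es. CS4 (Imp e (Dia (disj_list ds)))"
    using Dia_disj_list_upper_bound[OF \<open>d \<in> snd \<Delta>\<close> es(1)] by blast
  have "ded (insert a (box_part \<Delta>)) (Dia (disj_list ds))"
  proof (rule ded_disj_listE[OF es(2)])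
    fix e assume "e \<in> set es"
    then have "CS4 (Imp e (Dia (disj_list ds)))" using bound by blast
    then show "ded (insert e (insert a (box_part \<Delta>))) (Dia (disj_list ds))"
      by (rule ded.mp[OF ded.provable]) (simp add: ded.hyp)
  qed
  then have "ded (fst \<Delta>) (Box (Imp a (Dia (disj_list ds))))"
    by (intro ded_Box_if_ded_box_part ded_deduction)
  then have "ded (fst \<Delta>) (Dia (Dia (disj_list ds)))"
    using \<open>Dia a \<in> fst \<Delta>\<close> by (meson CS4.K_dia ded.hyp ded.mp ded.provable)
  then have "Dia (disj_list ds) \<in> fst \<Delta>"
    by (meson CS4.four_dia D ded.mp ded.provable theory_ded_closed)
  then show False using theory_Dia_notin[OF D ds] by blast
qed

lemma Dia_witness:
  assumes "\<Delta> \<in> Wc" and "Dia a \<in> fst \<Delta>"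
  shows "\<exists>\<Theta>\<in>Wc. sq_c \<Delta> \<Theta> \<and> a \<in> fst \<Theta>"
proof (cases "snd \<Delta> = {}")
  case True
  have "(UNIV, {}) \<in> Wc" by (simp add: Wc_def is_theory_def prime_set_def)
  with True show ?thesis by (intro bexI[of _ "(UNIV, {})"]) (auto simp: sq_c_def)
next
  case False
  then obtain Z where Z: "insert a (box_part \<Delta>) \<subseteq> Z" "prime_set Z"
    and cons: "consistent Z {Dia (disj_list ds) | ds. ds \<noteq> [] \<and> set ds \<subseteq> snd \<Delta>}"
    using lindenbaum[OF consistent_box_part_Dia[OF assms]] by blast
  have "(Z, snd \<Delta>) \<in> Wc"
    unfolding Wc_def is_theory_def
  proof (simp add: Z(2), intro allI impI)
    fix ds assume "ds \<noteq> []" "set ds \<subseteq> snd \<Delta>"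
    then show "Dia (disj_list ds) \<notin> Z" using consistent_disjoint[OF cons] by blast
  qed
  moreover have "sq_c \<Delta> (Z, snd \<Delta>)" using Z(1) by (simp add: sq_c_def)
  ultimately show ?thesis using Z(1) by (intro bexI[of _ "(Z, snd \<Delta>)"]) auto
qed

lemma Dia_in_theory_iff:
  assumes G: "\<Gamma> \<in> Wc"
  shows "(\<forall>\<Delta>\<in>Wc. pre_Sigma S \<Gamma> \<Delta> \<longrightarrow> (\<exists>\<Theta>\<in>Wc. sq_c \<Delta> \<Theta> \<and> a \<in> fst \<Theta>)) \<longleftrightarrow> Dia a \<in> fst \<Gamma>"
proof
  assume "Dia a \<in> fst \<Gamma>"
  then show "\<forall>\<Delta>\<in>Wc. pre_Sigma S \<Gamma> \<Delta> \<longrightarrow> (\<exists>\<Theta>\<in>Wc. sq_c \<Delta> \<Theta> \<and> a \<in> fst \<Theta>)"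
    using Dia_witness by (auto simp: pre_Sigma_def)
next
  assume R: "\<forall>\<Delta>\<in>Wc. pre_Sigma S \<Gamma> \<Delta> \<longrightarrow> (\<exists>\<Theta>\<in>Wc. sq_c \<Delta> \<Theta> \<and> a \<in> fst \<Theta>)"
  show "Dia a \<in> fst \<Gamma>"
  proof (rule ccontr)
    assume n: "Dia a \<notin> fst \<Gamma>"
    have "Dia (disj_list ds) \<notin> fst \<Gamma>" if "set ds \<subseteq> {a}" for ds
    proof
      have "CS4 (Imp (disj_list ds) a)"
        using ded_if_disj_list_singleton_set[OF that ded.hyp] CS4_imp_if_ded_singleton by blast
      moreover assume "Dia (disj_list ds) \<in> fst \<Gamma>"
      ultimately show False using n theory_ded_closed[OF G] ded_Dia_mono[OF ded.hyp] by blast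
    qed
    then have \<Delta>: "(fst \<Gamma>, {a}) \<in> Wc"
      using theory_prime[OF G] by (simp add: Wc_def is_theory_def)
    then obtain \<Theta> where \<Theta>: "\<Theta> \<in> Wc" "a \<in> snd \<Theta>" "a \<in> fst \<Theta>"
      using R G pre_Sigma_refl_fst[OF G \<Delta>] by (auto simp: sq_c_def)
    then have "ded (fst \<Theta>) (Dia a)" by (meson CS4.T_dia ded.hyp ded.mp ded.provable)
    then have "Dia (disj_list [a]) \<in> fst \<Theta>" using theory_ded_closed[OF \<Theta>(1)] by simp
    then show False using theory_Dia_notin[OF \<Theta>(1), of "[a]"] \<Theta>(2) by simp
  qed
qed

subsection \<open>Truth lemma and completeness\<close>

lemma subformula_closedD:
  "subformula_closed S \<Longrightarrow> \<phi> \<in> S \<Longrightarrow> \<psi> \<in> subformulas \<phi> \<Longrightarrow> \<psi> \<in> S"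
  unfolding subformula_closed_def by blast

lemma subformulas_refl [simp]: "\<phi> \<in> subformulas \<phi>"
  by (cases \<phi>) auto

lemma truth_lemma:
  assumes closed: "subformula_closed S"
  shows "\<phi> \<in> S \<Longrightarrow> \<Gamma> \<in> Wc \<Longrightarrow> sat (M_Sigma S) \<Gamma> \<phi> \<longleftrightarrow> \<phi> \<in> fst \<Gamma>"
proof (induction \<phi> arbitrary: \<Gamma>)
  case (Atom p)
  then show ?case by (simp add: V_c_def)
next
  case Bot
  then show ?case using fallible_iff_Bot by simp
next
  case (And a b)
  then have "sat (M_Sigma S) \<Gamma> (And a b) \<longleftrightarrow> a \<in> fst \<Gamma> \<and> b \<in> fst \<Gamma>"
    using subformula_closedD[OF closed And.prems(1)] by auto
  also have "\<dots> \<longleftrightarrow> And a b \<in> fst \<Gamma>"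
    using theory_ded_closed[OF And.prems(2)] ded_AndI ded_AndD1 ded_AndD2 ded.hyp by meson
  finally show ?case .
next
  case (Or a b)
  then have "sat (M_Sigma S) \<Gamma> (Or a b) \<longleftrightarrow> a \<in> fst \<Gamma> \<or> b \<in> fst \<Gamma>"
    using subformula_closedD[OF closed Or.prems(1)] by auto
  also have "\<dots> \<longleftrightarrow> Or a b \<in> fst \<Gamma>"
    using theory_ded_closed[OF Or.prems(2)] ded_OrI1 ded_OrI2 ded.hyp theory_prime[OF Or.prems(2)]
    unfolding prime_set_def by meson
  finally show ?case .
next
  case (Imp a b)
  then have "a \<in> S" "b \<in> S" using subformula_closedD[OF closed Imp.prems(1)] by auto
  with Imp show ?case using Imp_in_theory_iff[of \<Gamma> a S b] by auto
next
  case (Box a)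
  then have "a \<in> S" using subformula_closedD[OF closed Box.prems(1)] by auto
  with Box show ?case using Box_in_theory_iff[of \<Gamma> S a] by auto
next
  case (Dia a)
  then have "a \<in> S" using subformula_closedD[OF closed Dia.prems(1)] by auto
  with Dia show ?case using Dia_in_theory_iff[of \<Gamma> S a] by auto
qed

lemma CS4_iff_in_all_theories: "CS4 \<phi> \<longleftrightarrow> (\<forall>\<Gamma>\<in>Wc - Wbot_c. \<phi> \<in> fst \<Gamma>)"
proof
  assume "CS4 \<phi>"
  then show "\<forall>\<Gamma>\<in>Wc - Wbot_c. \<phi> \<in> fst \<Gamma>" using theory_ded_closed ded.provable by blast
next
  assume all: "\<forall>\<Gamma>\<in>Wc - Wbot_c. \<phi> \<in> fst \<Gamma>"
  show "CS4 \<phi>"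
  proof (rule ccontr)
    assume "\<not> CS4 \<phi>"
    then have "\<not> ded {} \<phi>" using CS4_if_ded_empty by blast
    then obtain Z where Z: "consistent Z {\<phi>}" "prime_set Z"
      using lindenbaum[OF consistent_singleton] by blast
    then have "\<phi> \<notin> Z" using consistent_disjoint by blast
    moreover have "(Z, {}) \<in> Wc - Wbot_c"
      using prime_set_theory[OF Z(2)] \<open>\<phi> \<notin> Z\<close> by (auto simp: Wbot_c_def)
    ultimately show False using all[rule_format, of "(Z, {})"] by simp
  qed
qed

theorem mainTheorem19:
  assumes "finite S" and "subformula_closed S"
  shows "(\<forall>\<Gamma>\<in>Wc. \<forall>\<phi>\<in>S. sat (M_Sigma S) \<Gamma> \<phi> \<longleftrightarrow> \<phi> \<in> fst \<Gamma>)
       \<and> (\<forall>\<phi>\<in>S. CS4 \<phi> \<longleftrightarrow> valid (M_Sigma S) \<phi>)"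
proof (intro conjI ballI)
  fix \<Gamma> \<phi> assume "\<Gamma> \<in> Wc" "\<phi> \<in> S"
  then show "sat (M_Sigma S) \<Gamma> \<phi> \<longleftrightarrow> \<phi> \<in> fst \<Gamma>" using truth_lemma[OF assms(2)] by blast
next
  fix \<phi> assume "\<phi> \<in> S"
  then have "valid (M_Sigma S) \<phi> \<longleftrightarrow> (\<forall>\<Gamma>\<in>Wc - Wbot_c. \<phi> \<in> fst \<Gamma>)"
    using truth_lemma[OF assms(2)] unfolding valid_def M_Sigma_simps by blast
  then show "CS4 \<phi> \<longleftrightarrow> valid (M_Sigma S) \<phi>" using CS4_iff_in_all_theories by blast
qed

end
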